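(* Let $\mathcal T$ be a text, let $u=\mathrm{locus}(\alpha)$ be an explicit node of its suffix tree, and let $\mathtt{st\text{-}lex}[b,e]$ be the range containing the text positions $j\in\mathtt{st\text{-}lex}$ such that $\mathcal T[1,j]$ is suffixed by $\alpha$. Then all (and only) the letters labeling the outgoing edges from node $u$ appear in $\mathcal L[b,e]\setminus\{\#\}$, that is, $\mathrm{out}(u)=\{c: c\in\mathcal L[b,e]\wedge c\ne\#\}$.
   Context: A text is a string $\mathcal T\in\Sigma^n$ over an integer alphabet whose last symbol $\mathcal T[n]=\$$ occurs only there and is smallest. $\mathrm{locus}(\alpha)$ is the suffix tree node whose root-to-node path label is $\alpha$; $\mathrm{out}(u)$ is the set of first characters of the labels of the outgoing edges of $u$. $\mathrm{ISA}[i]$ is the lexicographic rank of suffix $\mathcal T[i,n]$. For $i\ne j$, $\mathrm{rlce}(i,j)$ is the length of the longest common prefix of $\mathcal T[i,n]$ and $\mathcal T[j,n]$. For a permutation $\pi$, $\mathrm{LPF}_\pi[i]=0$ if $\pi(i)=1$, else $\mathrm{LPF}_\pi[i]=\max_{\pi(j)<\pi(i)}\mathrm{rlce}(j,i)$, and $\mathrm{PDA}_\pi=\{i+\mathrm{LPF}_\pi[i]:i\in[n]\}$. Let $\mathtt{st\text{-}lex}^-=\mathrm{PDA}_\pi$ for $\pi(i)=\mathrm{ISA}[i]$ and $\mathtt{st\text{-}lex}^+=\mathrm{PDA}_{\bar\pi}$ for $\bar\pi(i)=n-\mathrm{ISA}[i]+1$. The array $\mathtt{st\text{-}lex}$ lists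 the set $\{i-1: i\in\mathtt{st\text{-}lex}^-\cup\mathtt{st\text{-}lex}^+\cup\{n+1\}\}$ sorted colexicographically by the prefixes $\mathcal T[1,j]$ ($\mathcal T[1,0]$ being empty). With $\#\notin\Sigma$ a new symbol, $\mathcal L$ is the string of length $|\mathtt{st\text{-}lex}|$ with $\mathcal L[i]=\#$ if $\mathtt{st\text{-}lex}[i]=n$ and $\mathcal L[i]=\mathcal T[\mathtt{st\text{-}lex}[i]+1]$ otherwise. *)

theory Defs
  imports Main "HOL-Library.Sublist"
begin

text \<open>Texts are lists of integers, positions are 1-based: position i of T is T ! (i - 1).\<close>

definition is_text :: "int list \<Rightarrow> bool" where
  "is_text T \<longleftrightarrow> T \<noteq> [] \<and> (\<forall>x \<in> set (butlast T). last T < x)"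

definition suf :: "int list \<Rightarrow> nat \<Rightarrow> int list" where
  "suf T i = drop (i - 1) T"

definition pref :: "int list \<Rightarrow> nat \<Rightarrow> int list" where
  "pref T j = take j T"

definition lex_less :: "int list \<Rightarrow> int list \<Rightarrow> bool" where
  "lex_less xs ys \<longleftrightarrow> (xs, ys) \<in> lexord {(a, b). a < b}"

definition ISA :: "int list \<Rightarrow> nat \<Rightarrow> nat" where
  "ISA T i = Suc (card {j \<in> {1..length T}. lex_less (suf T j) (suf T i)})"

fun lcp :: "int list \<Rightarrow> int list \<Rightarrow> nat" where
  "lcp (x # xs) (y # ys) = (if x = y then Suc (lcp xs ys) else 0)"
| "lcp _ _ = 0"

definition rlce :: "int list \<Rightarrow> nat \<Rightarrow> nat \<Rightarrow> nat" where
  "rlce T i j = lcp (suf T i) (suf T j)"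

definition LPF :: "int list \<Rightarrow> (nat \<Rightarrow> nat) \<Rightarrow> nat \<Rightarrow> nat" where
  "LPF T \<pi> i = (if \<pi> i = 1 then 0
     else Max {rlce T j i | j. j \<in> {1..length T} \<and> \<pi> j < \<pi> i})"

definition PDA :: "int list \<Rightarrow> (nat \<Rightarrow> nat) \<Rightarrow> nat set" where
  "PDA T \<pi> = {i + LPF T \<pi> i | i. i \<in> {1..length T}}"

definition st_lex_minus :: "int list \<Rightarrow> nat set" where
  "st_lex_minus T = PDA T (ISA T)"

definition st_lex_plus :: "int list \<Rightarrow> nat set" where
  "st_lex_plus T = PDA T (\<lambda>i. length T - ISA T i + 1)"

definition st_lex_set :: "int list \<Rightarrow> nat set" where
  "st_lex_set T = {i - 1 | i. i \<in> st_lex_minus T \<union> st_lex_plus T \<union> {length T + 1}}"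

definition colex_less :: "int list \<Rightarrow> nat \<Rightarrow> nat \<Rightarrow> bool" where
  "colex_less T j k \<longleftrightarrow> lex_less (rev (pref T j)) (rev (pref T k))"

text \<open>L[k] for the array SL (1-based k); None encodes the new symbol #.\<close>
definition Lsym :: "int list \<Rightarrow> nat list \<Rightarrow> nat \<Rightarrow> int option" where
  "Lsym T SL k = (if SL ! (k - 1) = length T then None else Some (T ! (SL ! (k - 1))))"

text \<open>Suffix tree notions: out(locus alpha) = first letters of outgoing edges, i.e. the
  letters c such that alpha c occurs in T; locus(alpha) is an explicit node iff alpha
  occurs in T and is the root (empty), a leaf (a suffix of T) or a branching node.\<close>
definition out :: "int list \<Rightarrow> int list \<Rightarrow> int set" where
  "out T \<alpha> = {c. sublist (\<alpha> @ [c]) T}"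

definition explicit_node :: "int list \<Rightarrow> int list \<Rightarrow> bool" where
  "explicit_node T \<alpha> \<longleftrightarrow> sublist \<alpha> T \<and> (\<alpha> = [] \<or> suffix \<alpha> T \<or> card (out T \<alpha>) \<ge> 2)"

end

theory Submission
  imports Defs
begin

(* Every letter following an occurrence of \<alpha> in L[b,e] is in out(u): the entries of st-lex are
   at most n because ISA and its reverse are permutations of [1,n], so LPF never runs past $.
   Conversely, let c \<in> out(u) and let T[p,n] be the lexicographically smallest suffix starting
   with \<alpha>c. No suffix earlier in the ISA order shares the prefix \<alpha>c, so LPF[p] \<le> |\<alpha>|; if
   some suffix starting with \<alpha>c' for c' < c exists it precedes T[p,n], giving LPF[p] = |\<alpha>|.
   Symmetrically, if c' > c, the largest such suffix works for the reversed order. Either way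
   p + |\<alpha>| - 1 \<in> st-lex is an end of an occurrence of \<alpha> followed by c. Such a c' exists because
   u is explicit: if \<alpha> is nonempty and u is a leaf, the uniqueness of $ forbids any outgoing
   edge, so u branches; the root needs no c', as LPF[p] = 0 there for the smallest suffix. *)

lemma lcp_le_length: "lcp xs ys \<le> length ys"
  by (induction xs ys rule: lcp.induct) auto

lemma lcp_ge_if_common_prefix: "prefix u xs \<Longrightarrow> prefix u ys \<Longrightarrow> length u \<le> lcp xs ys"
  by (induction xs ys arbitrary: u rule: lcp.induct) (auto simp: prefix_Cons)

lemma prefix_if_lcp_ge: "length u \<le> lcp xs ys \<Longrightarrow> prefix u ys \<Longrightarrow> prefix u xs"
  by (induction xs ys arbitrary: u rule: lcp.induct) (auto simp: prefix_Cons split: if_splits)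

lemma lex_less_prefix_snoc:
  assumes "prefix (u @ [a]) xs" "prefix (u @ [b]) ys" "a < b"
  shows "lex_less xs ys"
proof -
  obtain xs' ys' where "xs = u @ a # xs'" "ys = u @ b # ys'"
    using assms(1,2) by (auto simp: prefix_def)
  then show ?thesis
    unfolding lex_less_def using assms(3) by (simp add: lexord_append_left_rightI)
qed

lemma lex_less_irrefl: "\<not> lex_less xs xs"
  unfolding lex_less_def by (rule lexord_irreflexive) auto

lemma lex_less_trans: "lex_less xs ys \<Longrightarrow> lex_less ys zs \<Longrightarrow> lex_less xs zs"
  unfolding lex_less_def by (erule lexord_trans) (auto simp: trans_def)

lemma lex_less_linear: "lex_less xs ys \<or> xs = ys \<or> lex_less ys xs"
  unfolding lex_less_def by (rule lexord_linear) auto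

lemma inj_on_suf: "inj_on (suf T) {1..length T}"
proof (rule inj_onI)
  fix i j assume "i \<in> {1..length T}" "j \<in> {1..length T}" "suf T i = suf T j"
  then have "length T - (i - 1) = length T - (j - 1)"
    by (metis length_drop suf_def)
  then show "i = j" using \<open>i \<in> {1..length T}\<close> \<open>j \<in> {1..length T}\<close> by auto
qed

lemma ISA_less_if_lex_less:
  assumes "j \<in> {1..length T}" "lex_less (suf T j) (suf T i)"
  shows "ISA T j < ISA T i"
proof -
  let ?smaller = "\<lambda>i. {k \<in> {1..length T}. lex_less (suf T k) (suf T i)}"
  have "?smaller j \<subset> ?smaller i"
    using assms lex_less_trans lex_less_irrefl by blast
  then have "card (?smaller j) < card (?smaller i)"
    by (simp add: psubset_card_mono)
  then show ?thesis unfolding ISA_def by simp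
qed

lemma ISA_le_length:
  assumes "i \<in> {1..length T}"
  shows "ISA T i \<le> length T"
proof -
  have "{k \<in> {1..length T}. lex_less (suf T k) (suf T i)} \<subseteq> {1..length T} - {i}"
    using lex_less_irrefl by auto
  then have "card {k \<in> {1..length T}. lex_less (suf T k) (suf T i)} \<le> length T - 1"
    using card_mono[of "{1..length T} - {i}"] assms by fastforce
  then show ?thesis using assms unfolding ISA_def by auto
qed

lemma inj_on_ISA: "inj_on (ISA T) {1..length T}"
proof (rule inj_onI, rule ccontr)
  fix i j assume ij: "i \<in> {1..length T}" "j \<in> {1..length T}" "ISA T i = ISA T j" "i \<noteq> j"
  then have "suf T i \<noteq> suf T j" using inj_on_suf by (metis inj_on_def)
  then show False
    using lex_less_linear ISA_less_if_lex_less ij(1-3) by (metis less_irrefl)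
qed

lemma ISA_image: "ISA T ` {1..length T} = {1..length T}"
proof (rule endo_inj_surj)
  show "ISA T ` {1..length T} \<subseteq> {1..length T}"
    using ISA_le_length by (fastforce simp: ISA_def)
qed (simp_all only: finite_atLeastAtMost inj_on_ISA)

definition ISA_rev :: "int list \<Rightarrow> nat \<Rightarrow> nat" where
  "ISA_rev T i = length T - ISA T i + 1"

lemma ISA_rev_image: "ISA_rev T ` {1..length T} = {1..length T}"
proof -
  have "(\<lambda>r. length T - r + 1) ` {1..length T} = {1..length T}"
    by (rule endo_inj_surj) (auto simp: inj_on_def)
  moreover have "ISA_rev T = (\<lambda>r. length T - r + 1) \<circ> ISA T"
    by (simp add: ISA_rev_def fun_eq_iff)
  ultimately show ?thesis
    by (simp only: image_comp[symmetric] ISA_image)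
qed

lemma ISA_rev_less_iff:
  assumes "i \<in> {1..length T}" "j \<in> {1..length T}"
  shows "ISA_rev T i < ISA_rev T j \<longleftrightarrow> ISA T j < ISA T i"
  using ISA_le_length[OF assms(1)] ISA_le_length[OF assms(2)] unfolding ISA_rev_def by linarith

lemma st_lex_plus_eq: "st_lex_plus T = PDA T (ISA_rev T)"
  unfolding st_lex_plus_def ISA_rev_def by (rule refl)

lemma LPF_le:
  assumes perm: "\<pi> ` {1..length T} = {1..length T}" and i: "i \<in> {1..length T}"
  shows "i + LPF T \<pi> i \<le> length T + 1"
proof (cases "\<pi> i = 1")
  case False
  let ?S = "{rlce T j i | j. j \<in> {1..length T} \<and> \<pi> j < \<pi> i}"
  have "1 \<in> \<pi> ` {1..length T}" "\<pi> i \<in> \<pi> ` {1..length T}" using perm i by auto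
  then have "?S \<noteq> {}" using False perm by (force simp: image_iff)
  moreover have "\<forall>x\<in>?S. x \<le> length T + 1 - i"
    using lcp_le_length[of _ "suf T i"] i by (auto simp: rlce_def suf_def)
  ultimately have "LPF T \<pi> i \<le> length T + 1 - i"
    using False by (simp add: LPF_def)
  then show ?thesis using i by auto
qed (use i in \<open>simp add: LPF_def\<close>)

lemma st_lex_set_le_length:
  assumes "j \<in> st_lex_set T"
  shows "j \<le> length T"
  using assms LPF_le[OF ISA_image] LPF_le[OF ISA_rev_image]
  unfolding st_lex_set_def st_lex_minus_def st_lex_plus_eq PDA_def by fastforce

lemma st_lex_setI:
  assumes "p \<in> {1..length T}" "\<pi> \<in> {ISA T, ISA_rev T}"
  shows "p + LPF T \<pi> p - 1 \<in> st_lex_set T"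
proof -
  have "p + LPF T \<pi> p \<in> st_lex_minus T \<union> st_lex_plus T"
    using assms unfolding st_lex_minus_def st_lex_plus_eq PDA_def by blast
  then show ?thesis unfolding st_lex_set_def by blast
qed

lemma LPF_eqI:
  assumes "\<pi> p \<noteq> 1" "q \<in> {1..length T}" "\<pi> q < \<pi> p" "rlce T q p = m"
    and "\<forall>q'\<in>{1..length T}. \<pi> q' < \<pi> p \<longrightarrow> rlce T q' p \<le> m"
  shows "LPF T \<pi> p = m"
  unfolding LPF_def using assms by (auto intro!: Max_eqI)

definition occurrences :: "int list \<Rightarrow> int list \<Rightarrow> nat set" where
  "occurrences T w = {p \<in> {1..length T}. prefix w (suf T p)}"

lemma occurrences_nonempty_if_sublist:
  assumes "sublist w T" "w \<noteq> []"
  shows "occurrences T w \<noteq> {}"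
proof -
  obtain ps ss where "T = ps @ w @ ss" using assms(1) by (auto simp: sublist_def)
  then have "Suc (length ps) \<in> occurrences T w"
    using assms(2) by (auto simp: occurrences_def suf_def Suc_le_eq)
  then show ?thesis by blast
qed

lemma occurrence_end:
  assumes "p \<in> occurrences T (\<alpha> @ [c])"
  defines "j \<equiv> p + length \<alpha> - 1"
  shows "j < length T" "suffix \<alpha> (pref T j)" "T ! j = c"
proof -
  obtain rest where rest: "drop (p - 1) T = \<alpha> @ c # rest"
    using assms(1) by (auto simp: occurrences_def suf_def prefix_def)
  define ps where "ps = take (p - 1) T"
  have T: "T = ps @ \<alpha> @ c # rest"
    using rest unfolding ps_def by (metis append_take_drop_id)
  have j: "j = length ps + length \<alpha>"
    using assms(1) by (auto simp: occurrences_def j_def ps_def)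
  show "j < length T" "suffix \<alpha> (pref T j)" "T ! j = c"
    by (auto simp: T j pref_def nth_append suffix_def)
qed

lemma sublist_snoc_nth_if_suffix_pref:
  assumes "j < length T" "suffix \<alpha> (pref T j)"
  shows "sublist (\<alpha> @ [T ! j]) T"
proof -
  have "suffix (\<alpha> @ [T ! j]) (take (Suc j) T)"
    using assms by (auto simp: pref_def suffix_def take_Suc_conv_app_nth)
  then show ?thesis
    using sublist_take sublist_order.order.trans suffix_imp_sublist by blast
qed

lemma LPF_first_occurrence:
  assumes perm: "\<pi> ` {1..length T} = {1..length T}"
    and p: "p \<in> occurrences T (\<alpha> @ [c])"
    and first: "\<forall>q \<in> occurrences T (\<alpha> @ [c]). \<pi> p \<le> \<pi> q"
    and earlier: "\<alpha> = [] \<or> (\<exists>q \<in> {1..length T}. \<pi> q < \<pi> p \<and> prefix \<alpha> (suf T q))"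
  shows "LPF T \<pi> p = length \<alpha>"
proof -
  have p_range: "p \<in> {1..length T}" and p_prefix: "prefix (\<alpha> @ [c]) (suf T p)"
    using p by (auto simp: occurrences_def)
  have range: "\<pi> q \<in> {1..length T}" if "q \<in> {1..length T}" for q
    using imageI[OF that, of \<pi>] perm by simp
  have upper: "\<forall>q \<in> {1..length T}. \<pi> q < \<pi> p \<longrightarrow> rlce T q p \<le> length \<alpha>"
  proof (intro ballI impI, rule ccontr)
    fix q assume q: "q \<in> {1..length T}" "\<pi> q < \<pi> p" "\<not> rlce T q p \<le> length \<alpha>"
    then have "prefix (\<alpha> @ [c]) (suf T q)"
      using prefix_if_lcp_ge[OF _ p_prefix] by (simp add: rlce_def)
    with q(1) have "q \<in> occurrences T (\<alpha> @ [c])" by (simp add: occurrences_def)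
    then show False using first q(2) by (meson leD)
  qed
  show ?thesis
  proof (cases "\<pi> p = 1")
    case True
    have "\<alpha> = []"
    proof (rule ccontr)
      assume "\<alpha> \<noteq> []"
      then obtain q where "q \<in> {1..length T}" "\<pi> q < \<pi> p" using earlier by blast
      with range[of q] True show False by simp
    qed
    then show ?thesis using True by (simp add: LPF_def)
  next
    case False
    obtain q where q: "q \<in> {1..length T}" "\<pi> q < \<pi> p" "prefix \<alpha> (suf T q)"
    proof (cases "\<alpha> = []")
      case True
      obtain q where "q \<in> {1..length T}" "\<pi> q = 1"
        using perm p_range by (metis atLeastAtMost_iff imageE le_trans order_refl)
      moreover have "1 < \<pi> p" using False range[OF p_range] by simp
      ultimately show thesis using that True by simp
    qed (use earlier in blast)
    have "length \<alpha> \<le> rlce T q p"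
      using lcp_ge_if_common_prefix[OF q(3) append_prefixD[OF p_prefix]] by (simp add: rlce_def)
    moreover have "rlce T q p \<le> length \<alpha>" using upper q(1,2) by blast
    ultimately show ?thesis using LPF_eqI[OF False q(1,2) _ upper] by simp
  qed
qed

lemma out_empty_if_suffix:
  assumes "is_text T" "\<alpha> \<noteq> []" "suffix \<alpha> T"
  shows "out T \<alpha> = {}"
proof (rule ccontr)
  assume "out T \<alpha> \<noteq> {}"
  then obtain c ps ss where "T = ps @ \<alpha> @ c # ss"
    by (auto simp: out_def sublist_def)
  then have "last \<alpha> \<in> set (butlast T)"
    using assms(2) by (simp add: butlast_append)
  moreover have "last T = last \<alpha>"
    using assms(2,3) by (auto simp: suffix_def)
  ultimately show False using assms(1) by (auto simp: is_text_def)
qed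

lemma explicit_node_other_letter:
  assumes "is_text T" "explicit_node T \<alpha>" "\<alpha> \<noteq> []" "c \<in> out T \<alpha>"
  shows "\<exists>c' \<in> out T \<alpha>. c' \<noteq> c"
proof -
  have "\<not> suffix \<alpha> T"
    using assms(1,3,4) out_empty_if_suffix by blast
  then have "2 \<le> card (out T \<alpha>)"
    using assms(2,3) by (simp add: explicit_node_def)
  then have "finite (out T \<alpha>)" "\<not> card (out T \<alpha>) \<le> Suc 0"
    by (auto intro: card_ge_0_finite)
  then show ?thesis
    using card_le_Suc0_iff_eq assms(4) by metis
qed

lemma out_realized_by_LPF:
  assumes "is_text T" "explicit_node T \<alpha>" and c: "c \<in> out T \<alpha>"
  shows "\<exists>\<pi> p. \<pi> \<in> {ISA T, ISA_rev T} \<and> p \<in> occurrences T (\<alpha> @ [c]) \<and> LPF T \<pi> p = length \<alpha>"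
proof -
  let ?occ = "occurrences T (\<alpha> @ [c])"
  have "?occ \<noteq> {}"
    using c occurrences_nonempty_if_sublist by (simp add: out_def)
  then obtain p0 where "p0 \<in> ?occ" by blast
  then have first: "\<exists>p \<in> ?occ. \<forall>q \<in> ?occ. \<pi> p \<le> \<pi> q" for \<pi> :: "nat \<Rightarrow> nat"
    using ex_has_least_nat[of "\<lambda>p. p \<in> ?occ" p0 \<pi>] by blast
  obtain pI where pI: "pI \<in> ?occ" "\<forall>q \<in> ?occ. ISA T pI \<le> ISA T q"
    using first by blast
  obtain pR where pR: "pR \<in> ?occ" "\<forall>q \<in> ?occ. ISA_rev T pR \<le> ISA_rev T q"
    using first by blast
  consider "LPF T (ISA T) pI = length \<alpha>" | "LPF T (ISA_rev T) pR = length \<alpha>"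
  proof (cases "\<alpha> = []")
    case True
    then show thesis using LPF_first_occurrence[OF ISA_image pI] that(1) by simp
  next
    case False
    obtain c' where c': "c' \<in> out T \<alpha>" "c' \<noteq> c"
      using explicit_node_other_letter[OF assms(1,2) False c] by blast
    then have "occurrences T (\<alpha> @ [c']) \<noteq> {}"
      using occurrences_nonempty_if_sublist by (simp add: out_def)
    then obtain q where q_range: "q \<in> {1..length T}" and q_prefix: "prefix (\<alpha> @ [c']) (suf T q)"
      by (auto simp: occurrences_def)
    have pI_prefix: "prefix (\<alpha> @ [c]) (suf T pI)" and pR_prefix: "prefix (\<alpha> @ [c]) (suf T pR)"
      using pI(1) pR(1) by (simp_all add: occurrences_def)
    show thesis
    proof (cases "c' < c")
      case True
      then have "ISA T q < ISA T pI"
        using ISA_less_if_lex_less[OF q_range] lex_less_prefix_snoc[OF q_prefix pI_prefix] by blast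
      then show thesis
        using LPF_first_occurrence[OF ISA_image pI] q_range append_prefixD[OF q_prefix] that(1)
        by blast
    next
      case False
      then have "ISA T pR < ISA T q"
        using c'(2) ISA_less_if_lex_less pR(1) lex_less_prefix_snoc[OF pR_prefix q_prefix]
        by (simp add: occurrences_def)
      then have "ISA_rev T q < ISA_rev T pR"
        using ISA_rev_less_iff q_range pR(1) by (simp add: occurrences_def)
      then show thesis
        using LPF_first_occurrence[OF ISA_rev_image pR] q_range append_prefixD[OF q_prefix] that(2)
        by blast
    qed
  qed
  then show ?thesis using pI(1) pR(1) by (metis insertI1 insertI2 singletonI)
qed

lemma Lsym_eq_Some_iff:
  assumes "set SL = st_lex_set T" "k \<in> {1..length SL}"
  shows "Lsym T SL k = Some c \<longleftrightarrow> SL ! (k - 1) < length T \<and> T ! (SL ! (k - 1)) = c"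
proof -
  have "SL ! (k - 1) \<le> length T"
    using assms nth_mem[of "k - 1" SL] st_lex_set_le_length by fastforce
  then show ?thesis by (auto simp: Lsym_def)
qed

theorem corollary25:
  fixes T \<alpha> :: "int list" and SL :: "nat list" and b e :: nat
  assumes "is_text T"
    and "explicit_node T \<alpha>"
    and "set SL = st_lex_set T" and "sorted_wrt (colex_less T) SL"
    and "1 \<le> b" and "e \<le> length SL"
    and "\<forall>k \<in> {1..length SL}. (b \<le> k \<and> k \<le> e) \<longleftrightarrow> suffix \<alpha> (pref T (SL ! (k - 1)))"
  shows "out T \<alpha> = {c. \<exists>k \<in> {b..e}. Lsym T SL k = Some c}"
proof (intro set_eqI iffI)
  fix c assume "c \<in> out T \<alpha>"
  then obtain \<pi> p where "\<pi> \<in> {ISA T, ISA_rev T}" and p: "p \<in> occurrences T (\<alpha> @ [c])"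
    and "LPF T \<pi> p = length \<alpha>"
    using out_realized_by_LPF assms(1,2) by blast
  then have "p + length \<alpha> - 1 \<in> set SL"
    using st_lex_setI assms(3) by (metis occurrences_def mem_Collect_eq)
  then obtain i where i: "i < length SL" "SL ! i = p + length \<alpha> - 1"
    by (auto simp: in_set_conv_nth)
  have "Suc i \<in> {b..e}"
    using assms(7) i occurrence_end(2)[OF p] by auto
  moreover have "Lsym T SL (Suc i) = Some c"
    using Lsym_eq_Some_iff[OF assms(3)] i occurrence_end(1,3)[OF p] by simp
  ultimately show "c \<in> {c. \<exists>k \<in> {b..e}. Lsym T SL k = Some c}" by blast
next
  fix c assume "c \<in> {c. \<exists>k \<in> {b..e}. Lsym T SL k = Some c}"
  then obtain k where k: "k \<in> {b..e}" "Lsym T SL k = Some c" by blast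
  then have "k \<in> {1..length SL}" using assms(5,6) by simp
  then show "c \<in> out T \<alpha>"
    using k assms(3,7) Lsym_eq_Some_iff sublist_snoc_nth_if_suffix_pref by (auto simp: out_def)
qed

end
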